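(* Let $n\in\mathbb N$ and write $n=mp+c$ with $m\in\mathbb N_0$ and $0\le c<p$. Then the sign representation $\mathrm{sgn}(n)$ of $\mathfrak S_n$ is isomorphic to the signed Young module $Y((1^c)|(mp))$.
   Context: $F$ is a field of odd prime characteristic $p$; $\mathfrak S_n$ is the symmetric group on $\{1,\dots,n\}$. $(1^c)$ is the partition with $c$ parts equal to $1$, and $(mp)=p\cdot(m)$ (empty if $m=0$). For a pair $(\alpha|\beta)$ of partitions with $|\alpha|+|\beta|=n$ (the set of these is $\mathscr P^2(n)$), $M(\alpha|\beta)=\mathrm{Ind}_{\mathfrak S_\alpha\times\mathfrak S_\beta}^{\mathfrak S_n}(F\boxtimes\mathrm{sgn})$ with $\mathfrak S_\alpha$ the Young subgroup of $\{1,\dots,|\alpha|\}$ acting trivially and $\mathfrak S_\beta$ the Young subgroup of $\{|\alpha|+1,\dots,n\}$ acting by sign. Dominance: $(\lambda|\nu)\trianglerighteq(\alpha|\beta)$ iff for all $k\ge1$, $\sum_{i\le k}\lambda_i\ge\sum_{i\le k}\alpha_i$ and $|\lambda|+\sum_{i\le k}\nu_i\ge|\alpha|+\sum_{i\le k}\beta_i$. Signed Young module $Y(\lambda|p\mu)$ (partitions $\lambda,\mu$, $|\lambda|+p|\mu|=n$): the unique (up to isomorphism) indecomposable summand of $M(\lambda|p\mu)$ that is a summand of $M(\alpha|\beta)$, $(\alpha|\beta)\in\mathscr P^2(n)$, only if $(\lambda|p\mu)\trianglerighteq(\alpha|\beta)$. *)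

theory Defs
  imports "HOL-Combinatorics.Permutations" "HOL-Computational_Algebra.Primes"
begin

text \<open>Representations of S_n over a field 'f are modelled concretely: the underlying space is a
subspace V of the function space 'x => 'f (pointwise operations), and rho s is the action of s.\<close>

definition Sym :: "nat \<Rightarrow> (nat \<Rightarrow> nat) set" where
  "Sym n = {s. s permutes {1..n}}"

definition is_subspace :: "('x \<Rightarrow> 'f::field) set \<Rightarrow> bool" where
  "is_subspace V \<longleftrightarrow> (\<lambda>_. 0) \<in> V \<and> (\<forall>f\<in>V. \<forall>g\<in>V. (\<lambda>x. f x + g x) \<in> V)
     \<and> (\<forall>c. \<forall>f\<in>V. (\<lambda>x. c * f x) \<in> V)"

definition is_linear_on :: "('x \<Rightarrow> 'f::field) set \<Rightarrow> (('x \<Rightarrow> 'f) \<Rightarrow> ('y \<Rightarrow> 'f)) \<Rightarrow> bool" where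
  "is_linear_on V \<phi> \<longleftrightarrow> (\<forall>f\<in>V. \<forall>g\<in>V. \<phi> (\<lambda>x. f x + g x) = (\<lambda>y. \<phi> f y + \<phi> g y))
     \<and> (\<forall>c. \<forall>f\<in>V. \<phi> (\<lambda>x. c * f x) = (\<lambda>y. c * \<phi> f y))"

definition is_rep :: "nat \<Rightarrow> ('x \<Rightarrow> 'f::field) set \<Rightarrow> ((nat \<Rightarrow> nat) \<Rightarrow> ('x \<Rightarrow> 'f) \<Rightarrow> ('x \<Rightarrow> 'f)) \<Rightarrow> bool" where
  "is_rep n V \<rho> \<longleftrightarrow> is_subspace V
     \<and> (\<forall>s\<in>Sym n. \<rho> s ` V \<subseteq> V \<and> is_linear_on V (\<rho> s))
     \<and> (\<forall>v\<in>V. \<rho> id v = v)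
     \<and> (\<forall>s\<in>Sym n. \<forall>t\<in>Sym n. \<forall>v\<in>V. \<rho> (s \<circ> t) v = \<rho> s (\<rho> t v))"

definition is_subrep :: "nat \<Rightarrow> ('x \<Rightarrow> 'f::field) set \<Rightarrow> ('x \<Rightarrow> 'f) set \<Rightarrow> ((nat \<Rightarrow> nat) \<Rightarrow> ('x \<Rightarrow> 'f) \<Rightarrow> ('x \<Rightarrow> 'f)) \<Rightarrow> bool" where
  "is_subrep n W V \<rho> \<longleftrightarrow> W \<subseteq> V \<and> is_subspace W \<and> (\<forall>s\<in>Sym n. \<rho> s ` W \<subseteq> W)"

definition is_direct_sum :: "('x \<Rightarrow> 'f::field) set \<Rightarrow> ('x \<Rightarrow> 'f) set \<Rightarrow> ('x \<Rightarrow> 'f) set \<Rightarrow> bool" where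
  "is_direct_sum V W1 W2 \<longleftrightarrow> W1 \<inter> W2 = {\<lambda>_. 0}
     \<and> (\<forall>v\<in>V. \<exists>w1\<in>W1. \<exists>w2\<in>W2. v = (\<lambda>x. w1 x + w2 x))"

definition is_hom :: "nat \<Rightarrow> ('x \<Rightarrow> 'f::field) set \<Rightarrow> ((nat \<Rightarrow> nat) \<Rightarrow> ('x \<Rightarrow> 'f) \<Rightarrow> ('x \<Rightarrow> 'f))
    \<Rightarrow> ('y \<Rightarrow> 'f) set \<Rightarrow> ((nat \<Rightarrow> nat) \<Rightarrow> ('y \<Rightarrow> 'f) \<Rightarrow> ('y \<Rightarrow> 'f)) \<Rightarrow> (('x \<Rightarrow> 'f) \<Rightarrow> ('y \<Rightarrow> 'f)) \<Rightarrow> bool" where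
  "is_hom n V \<rho> W \<tau> \<phi> \<longleftrightarrow> \<phi> ` V \<subseteq> W \<and> is_linear_on V \<phi>
     \<and> (\<forall>s\<in>Sym n. \<forall>v\<in>V. \<phi> (\<rho> s v) = \<tau> s (\<phi> v))"

definition is_iso :: "nat \<Rightarrow> ('x \<Rightarrow> 'f::field) set \<Rightarrow> ((nat \<Rightarrow> nat) \<Rightarrow> ('x \<Rightarrow> 'f) \<Rightarrow> ('x \<Rightarrow> 'f))
    \<Rightarrow> ('y \<Rightarrow> 'f) set \<Rightarrow> ((nat \<Rightarrow> nat) \<Rightarrow> ('y \<Rightarrow> 'f) \<Rightarrow> ('y \<Rightarrow> 'f)) \<Rightarrow> bool" where
  "is_iso n V \<rho> W \<tau> \<longleftrightarrow> (\<exists>\<phi>. is_hom n V \<rho> W \<tau> \<phi> \<and> bij_betw \<phi> V W)"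

definition is_summand :: "nat \<Rightarrow> ('y \<Rightarrow> 'f::field) set \<Rightarrow> ((nat \<Rightarrow> nat) \<Rightarrow> ('y \<Rightarrow> 'f) \<Rightarrow> ('y \<Rightarrow> 'f))
    \<Rightarrow> ('x \<Rightarrow> 'f) set \<Rightarrow> ((nat \<Rightarrow> nat) \<Rightarrow> ('x \<Rightarrow> 'f) \<Rightarrow> ('x \<Rightarrow> 'f)) \<Rightarrow> bool" where
  "is_summand n X \<rho>X V \<rho> \<longleftrightarrow> (\<exists>W1 W2. is_subrep n W1 V \<rho> \<and> is_subrep n W2 V \<rho>
      \<and> is_direct_sum V W1 W2 \<and> is_iso n X \<rho>X W1 \<rho>)"

definition indecomposable :: "nat \<Rightarrow> ('x \<Rightarrow> 'f::field) set \<Rightarrow> ((nat \<Rightarrow> nat) \<Rightarrow> ('x \<Rightarrow> 'f) \<Rightarrow> ('x \<Rightarrow> 'f)) \<Rightarrow> bool" where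
  "indecomposable n V \<rho> \<longleftrightarrow> V \<noteq> {\<lambda>_. 0} \<and>
     \<not> (\<exists>W1 W2. is_subrep n W1 V \<rho> \<and> is_subrep n W2 V \<rho> \<and> is_direct_sum V W1 W2
          \<and> W1 \<noteq> {\<lambda>_. 0} \<and> W2 \<noteq> {\<lambda>_. 0})"

definition is_partition :: "nat list \<Rightarrow> bool" where
  "is_partition a \<longleftrightarrow> sorted (rev a) \<and> 0 \<notin> set a"

definition dominates2 :: "nat list \<Rightarrow> nat list \<Rightarrow> nat list \<Rightarrow> nat list \<Rightarrow> bool" where
  "dominates2 l v a b \<longleftrightarrow> (\<forall>k\<ge>1. sum_list (take k l) \<ge> sum_list (take k a)
      \<and> sum_list l + sum_list (take k v) \<ge> sum_list a + sum_list (take k b))"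

text \<open>Index (0-based) of the block of the composition g (blocks are consecutive intervals
starting at 1) containing i.\<close>
definition block_of :: "nat list \<Rightarrow> nat \<Rightarrow> nat" where
  "block_of g i = (LEAST k. i \<le> sum_list (take (Suc k) g))"

text \<open>Young subgroup S_a x S_b of S_n: S_a acts on {1..|a|}, S_b on {|a|+1..n}.\<close>
definition young_sub :: "nat \<Rightarrow> nat list \<Rightarrow> nat list \<Rightarrow> (nat \<Rightarrow> nat) set" where
  "young_sub n a b = {h \<in> Sym n. \<forall>i\<in>{1..n}. block_of (a @ b) (h i) = block_of (a @ b) i}"

text \<open>The linear character of S_a x S_b which is trivial on S_a and the sign on S_b.\<close>
definition young_char :: "nat list \<Rightarrow> (nat \<Rightarrow> nat) \<Rightarrow> 'f::field" where
  "young_char a h = of_int (sign (\<lambda>i. if sum_list a < i then h i else i))"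

text \<open>M(a|b) = Ind (F boxtimes sgn) from S_a x S_b to S_n, realised (as the isomorphic
co-induced module) as the functions f on S_n with f (h o g) = chi(h) f(g) for h in the Young
subgroup, with S_n acting by right translation.\<close>
definition Mspace :: "nat \<Rightarrow> nat list \<Rightarrow> nat list \<Rightarrow> ((nat \<Rightarrow> nat) \<Rightarrow> 'f::field) set" where
  "Mspace n a b = {f. (\<forall>g. g \<notin> Sym n \<longrightarrow> f g = 0)
      \<and> (\<forall>h\<in>young_sub n a b. \<forall>g\<in>Sym n. f (h \<circ> g) = young_char a h * f g)}"

definition Mact :: "(nat \<Rightarrow> nat) \<Rightarrow> ((nat \<Rightarrow> nat) \<Rightarrow> 'f::field) \<Rightarrow> ((nat \<Rightarrow> nat) \<Rightarrow> 'f)" where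
  "Mact s f = (\<lambda>g. f (g \<circ> s))"

definition sgn_space :: "(unit \<Rightarrow> 'f::field) set" where
  "sgn_space = UNIV"

definition sgn_act :: "(nat \<Rightarrow> nat) \<Rightarrow> (unit \<Rightarrow> 'f::field) \<Rightarrow> (unit \<Rightarrow> 'f)" where
  "sgn_act s f = (\<lambda>u. of_int (sign s) * f u)"

text \<open>(X, rhoX) is (isomorphic to) the signed Young module Y(l|p mu): the indecomposable
summand of M(l|p mu) which is a summand of M(a|b) only if (l|p mu) dominates (a|b).
By the existence/uniqueness result quoted in the paper's definition, this determines
Y(l|p mu) up to isomorphism.\<close>
definition is_signed_young :: "nat \<Rightarrow> nat \<Rightarrow> nat list \<Rightarrow> nat list
    \<Rightarrow> ('x \<Rightarrow> 'f::field) set \<Rightarrow> ((nat \<Rightarrow> nat) \<Rightarrow> ('x \<Rightarrow> 'f) \<Rightarrow> ('x \<Rightarrow> 'f)) \<Rightarrow> bool" where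
  "is_signed_young n p l mu X \<rho>X \<longleftrightarrow>
     is_partition l \<and> is_partition mu \<and> sum_list l + p * sum_list mu = n
     \<and> is_rep n X \<rho>X \<and> indecomposable n X \<rho>X
     \<and> is_summand n X \<rho>X (Mspace n l (map ((*) p) mu) :: ((nat \<Rightarrow> nat) \<Rightarrow> 'f) set) Mact
     \<and> (\<forall>a b. is_partition a \<and> is_partition b \<and> sum_list a + sum_list b = n
          \<and> is_summand n X \<rho>X (Mspace n a b :: ((nat \<Rightarrow> nat) \<Rightarrow> 'f) set) Mact
          \<longrightarrow> dominates2 l (map ((*) p) mu) a b)"

end

theory Submission
  imports Defs "HOL-Algebra.Sym_Groups"
begin

text \<open>The sign representation is one-dimensional, hence indecomposable. The Young subgroup of
  \<open>M((1\<^sup>c)|(mp))\<close> is the pointwise stabiliser \<open>K\<^sub>c\<close> of \<open>1, \<dots>, c\<close>, whose index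
  \<open>n (n - 1) \<cdots> (n - c + 1)\<close> is prime to \<open>p\<close>; so the line spanned by the sign function is
  complemented by the kernel of the sign-weighted sum over coset representatives, and \<open>sgn\<close> is a
  summand. Conversely, a sign-isotypic vector in \<open>M(\<alpha>|\<beta>)\<close> forces the character to be the sign on
  the Young subgroup; since \<open>p \<noteq> 2\<close> a transposition inside a block rules out parts \<open>\<ge> 2\<close>, so
  \<open>\<alpha> = (1\<^sup>r)\<close>. If \<open>r > c\<close>, the Young subgroup lies in \<open>K\<^sub>c\<^sub>+\<^sub>1\<close>, whose index has the factor
  \<open>n - c = mp\<close>, and the sign-twisted relative trace from \<open>K\<^sub>c\<^sub>+\<^sub>1\<close> puts the sign-isotypic vector
  into the complementary summand as well. Hence \<open>r \<le> c\<close>, which gives the dominance condition.\<close>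

lemma sum_list_take_mono: "j \<le> k \<Longrightarrow> sum_list (take j (xs :: nat list)) \<le> sum_list (take k xs)"
  by (metis le_add1 le_add_diff_inverse sum_list_append take_add)

lemma sum_list_take_le: "sum_list (take k (xs :: nat list)) \<le> sum_list xs"
  by (metis append_take_drop_id le_add1 sum_list_append)

lemma block_of_eq:
  assumes "sum_list (take j g) < i" "i \<le> sum_list (take (Suc j) g)"
  shows "block_of g i = j"
  unfolding block_of_def
proof (rule Least_equality)
  fix k assume "i \<le> sum_list (take (Suc k) g)"
  then show "j \<le> k"
    using assms(1) sum_list_take_mono[of "Suc k" j g] by (meson leD le_trans not_less_eq_eq)
qed (fact assms(2))

lemma block_of_bounds:
  assumes "1 \<le> i" "i \<le> sum_list g"
  shows "sum_list (take (block_of g i) g) < i" "i \<le> sum_list (take (Suc (block_of g i)) g)"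
proof -
  have "i \<le> sum_list (take (Suc (length g)) g)" using assms by simp
  then show "i \<le> sum_list (take (Suc (block_of g i)) g)"
    unfolding block_of_def by (rule LeastI)
  show "sum_list (take (block_of g i) g) < i"
  proof (cases "block_of g i")
    case (Suc k)
    then have "\<not> i \<le> sum_list (take (Suc k) g)"
      unfolding block_of_def by (metis lessI not_less_Least)
    then show ?thesis using Suc by simp
  qed (use assms in simp)
qed

lemma sum_list_take_replicate_one: "sum_list (take k (replicate r (1::nat))) = min k r"
  by (simp add: sum_list_replicate)

lemma sum_list_take_ones_append: "k \<le> r \<Longrightarrow> sum_list (take k (replicate r (1::nat) @ b)) = k"
  by (simp add: sum_list_replicate)

lemma block_of_ones_low:
  assumes "1 \<le> i" "i \<le> r"
  shows "block_of (replicate r 1 @ b) i = i - 1"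
  by (rule block_of_eq) (use assms sum_list_take_ones_append[of "i - 1" r b]
      sum_list_take_ones_append[of i r b] in auto)

lemma block_of_ones_high:
  assumes "length b \<le> 1" "r < i" "i \<le> r + sum_list b"
  shows "block_of (replicate r 1 @ b) i = r"
proof (rule block_of_eq)
  show "sum_list (take r (replicate r 1 @ b)) < i"
    using sum_list_take_ones_append[of r r b] assms by simp
  have "take 1 b = b" using assms(1) by (cases b) auto
  then show "i \<le> sum_list (take (Suc r) (replicate r 1 @ b))"
    using assms by (simp add: sum_list_replicate)
qed

lemma Sym_carrier: "Sym n = carrier (sym_group n)"
  by (auto simp: Sym_def sym_group_carrier)

lemma id_in_Sym: "id \<in> Sym n"
  by (simp add: Sym_def)

lemma Sym_comp: "g \<in> Sym n \<Longrightarrow> s \<in> Sym n \<Longrightarrow> g \<circ> s \<in> Sym n"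
  by (simp add: Sym_def permutes_compose)

lemma Sym_inv: "s \<in> Sym n \<Longrightarrow> inv' s \<in> Sym n"
  by (simp add: Sym_def permutes_inv)

lemma Sym_comp_iff:
  assumes s: "s \<in> Sym n" shows "g \<circ> s \<in> Sym n \<longleftrightarrow> g \<in> Sym n"
proof
  assume "g \<circ> s \<in> Sym n"
  then have "(g \<circ> s) \<circ> inv' s \<in> Sym n" using Sym_comp Sym_inv s by blast
  then show "g \<in> Sym n"
    using permutes_inv_o(1)[of s "{1..n}"] s by (simp add: Sym_def comp_assoc)
qed (use Sym_comp s in blast)

lemma permutation_if_Sym: "s \<in> Sym n \<Longrightarrow> permutation s"
  unfolding Sym_def permutation_permutes by blast

lemma sign_comp_Sym: "s \<in> Sym n \<Longrightarrow> t \<in> Sym n \<Longrightarrow> sign (s \<circ> t) = sign s * sign t"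
  by (simp add: permutation_if_Sym sign_compose)

lemma sign_inv_Sym: "s \<in> Sym n \<Longrightarrow> sign (inv' s) = sign s"
  by (simp add: permutation_if_Sym sign_inverse)

lemma of_int_sign_square: "(of_int (sign s) :: 'a::ring_1) * of_int (sign s) = 1"
  by (metis of_int_1 of_int_mult sign_idempotent)

lemma of_int_sign_comp_Sym:
  "s \<in> Sym n \<Longrightarrow> t \<in> Sym n \<Longrightarrow> (of_int (sign (s \<circ> t)) :: 'a::ring_1) = of_int (sign s) * of_int (sign t)"
  by (simp add: sign_comp_Sym)

lemma of_int_sign_mult_cancel: "(of_int (sign s) :: 'a::ring_1) * (of_int (sign s) * x) = x"
  by (simp add: mult.assoc[symmetric] of_int_sign_square)

lemma one_neq_minus_one_if_CHAR_odd_prime: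
  assumes "prime p" "odd p" "CHAR('a::ring_1) = p"
  shows "(1::'a) \<noteq> -1"
proof
  assume "(1::'a) = -1"
  then have "(of_nat 2 :: 'a) = 0" by (metis add_eq_0_iff2 one_add_one of_nat_numeral)
  then have "p dvd 2" using assms(3) of_nat_eq_0_iff_char_dvd by metis
  then have "p \<le> 2" by (simp add: dvd_imp_le)
  moreover have "p \<ge> 2" using assms(1) prime_ge_2_nat by blast
  ultimately show False using assms(2) by simp
qed

section \<open>Pointwise stabilisers\<close>

definition pointwise_stab :: "nat \<Rightarrow> nat \<Rightarrow> (nat \<Rightarrow> nat) set" where
  "pointwise_stab n j = {g \<in> Sym n. \<forall>i\<in>{1..j}. g i = i}"

lemma pointwise_stab_subset_Sym: "pointwise_stab n j \<subseteq> Sym n"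
  by (auto simp: pointwise_stab_def)

lemma pointwise_stab_antimono: "j \<le> k \<Longrightarrow> pointwise_stab n k \<subseteq> pointwise_stab n j"
  by (auto simp: pointwise_stab_def)

lemma pointwise_stab_eq_permutes: "pointwise_stab n j = {g. g permutes {Suc j..n}}"
proof (rule Set.set_eqI, rule iffI)
  fix g assume "g \<in> pointwise_stab n j"
  then have gp: "g permutes {1..n}" and gf: "\<forall>i\<in>{1..j}. g i = i"
    by (auto simp: pointwise_stab_def Sym_def)
  have "g x = x" if "x \<in> {1..n} - {Suc j..n}" for x
  proof -
    have "x \<in> {1..j}" using that by auto
    then show ?thesis using gf by blast
  qed
  then have "g permutes {Suc j..n}" by (rule permutes_superset[OF gp])
  then show "g \<in> {g. g permutes {Suc j..n}}" by simp
next
  fix g assume "g \<in> {g. g permutes {Suc j..n}}"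
  then have g: "g permutes {Suc j..n}" by simp
  have "g permutes {1..n}" by (rule permutes_subset[OF g]) auto
  then show "g \<in> pointwise_stab n j"
    using permutes_not_in[OF g] by (auto simp: pointwise_stab_def Sym_def)
qed

lemma card_pointwise_stab: "j \<le> n \<Longrightarrow> card (pointwise_stab n j) = fact (n - j)"
  using card_permutations[of "{Suc j..n}"] by (simp add: pointwise_stab_eq_permutes)

lemma subgroup_pointwise_stab: "subgroup (pointwise_stab n j) (sym_group n)"
proof
  show "pointwise_stab n j \<subseteq> carrier (sym_group n)"
    using pointwise_stab_subset_Sym Sym_carrier by blast
  show "x \<otimes>\<^bsub>sym_group n\<^esub> y \<in> pointwise_stab n j"
    if "x \<in> pointwise_stab n j" "y \<in> pointwise_stab n j" for x y
    using that Sym_comp by (auto simp: pointwise_stab_def sym_group_mult)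
  show "\<one>\<^bsub>sym_group n\<^esub> \<in> pointwise_stab n j"
    using id_in_Sym by (auto simp: pointwise_stab_def sym_group_one)
  show "inv\<^bsub>sym_group n\<^esub> x \<in> pointwise_stab n j" if x: "x \<in> pointwise_stab n j" for x
  proof -
    have xp: "x permutes {1..n}" and xf: "\<forall>i\<in>{1..j}. x i = i"
      using x by (auto simp: pointwise_stab_def Sym_def)
    have "inv' x i = i" if "i \<in> {1..j}" for i
      using xf that permutes_inverses(2)[OF xp, of i] by metis
    then have "inv' x \<in> pointwise_stab n j"
      using permutes_inv[OF xp] by (auto simp: pointwise_stab_def Sym_def)
    moreover have "x \<in> carrier (sym_group n)" using x pointwise_stab_subset_Sym Sym_carrier by blast
    ultimately show ?thesis by simp
  qed
qed

lemma card_rcosets_pointwise_stab: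
  assumes "j \<le> n"
  shows "card (rcosets\<^bsub>sym_group n\<^esub> pointwise_stab n j) = prod Suc {n - j..<n}"
proof -
  interpret group "sym_group n" by (rule sym_group_is_group)
  have "card (rcosets\<^bsub>sym_group n\<^esub> pointwise_stab n j) * fact (n - j) = (fact n :: nat)"
    using lagrange[OF subgroup_pointwise_stab[of n j]] card_pointwise_stab[OF assms]
      sym_group_card_carrier[of n]
    by (simp add: order_def)
  moreover have "fact n = prod Suc {n - j..<n} * (fact (n - j) :: nat)"
    using fact_split[OF assms, where 'a=nat] by simp
  ultimately show ?thesis by (metis fact_nonzero mult_right_cancel)
qed

lemma dvd_index_pointwise_stab:
  assumes "p > 0" "m \<ge> 1" "n = m * p + c"
  shows "p dvd card (rcosets\<^bsub>sym_group n\<^esub> pointwise_stab n (Suc c))"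
proof -
  have "1 * p \<le> m * p" using assms(2) by (rule mult_le_mono1)
  then have le: "Suc c \<le> n" using assms by linarith
  then have "n - Suc c \<in> {n - Suc c..<n}" by auto
  moreover have "Suc (n - Suc c) = m * p" using le assms by simp
  ultimately have "m * p dvd prod Suc {n - Suc c..<n}" by (metis dvd_prodI finite_atLeastLessThan)
  then show ?thesis using card_rcosets_pointwise_stab[OF le] dvd_mult_right by metis
qed

lemma not_dvd_index_pointwise_stab:
  assumes "prime p" "c < p" "n = m * p + c"
  shows "\<not> p dvd card (rcosets\<^bsub>sym_group n\<^esub> pointwise_stab n c)"
proof
  assume "p dvd card (rcosets\<^bsub>sym_group n\<^esub> pointwise_stab n c)"
  then have "p dvd prod Suc {n - c..<n}" using card_rcosets_pointwise_stab[of c n] assms by simp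
  then obtain i where i: "i \<in> {n - c..<n}" "p dvd Suc i"
    using prime_dvd_prod_iff[OF _ assms(1)] by blast
  define d where "d = i - m * p"
  have d: "Suc i = m * p + Suc d" "d < c" using i(1) assms(3) unfolding d_def by auto
  then have "p dvd Suc d" using i(2) by (metis dvd_add_right_iff dvd_triv_right)
  moreover have "Suc d < p" using d assms by simp
  ultimately show False using nat_dvd_not_less[of "Suc d" p] by simp
qed

section \<open>Right cosets in \<open>S\<^sub>n\<close> and the sign-twisted trace\<close>

definition coset_rep :: "'a set \<Rightarrow> 'a" where
  "coset_rep C = (SOME x. x \<in> C)"

lemma mem_rcos_Sym_iff:
  assumes K: "subgroup K (sym_group n)" and t: "t \<in> Sym n"
  shows "x \<in> K #>\<^bsub>sym_group n\<^esub> t \<longleftrightarrow> x \<in> Sym n \<and> x \<circ> inv' t \<in> K"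
proof
  have tp: "t permutes {1..n}" using t by (simp add: Sym_def)
  assume "x \<in> K #>\<^bsub>sym_group n\<^esub> t"
  then obtain h where h: "h \<in> K" "x = h \<circ> t" unfolding r_coset_def sym_group_mult by auto
  have "h \<in> Sym n" using h(1) subgroup.subset[OF K] Sym_carrier by auto
  then show "x \<in> Sym n \<and> x \<circ> inv' t \<in> K"
    using h t permutes_inv_o(1)[OF tp] Sym_comp by (simp add: comp_assoc)
next
  have tp: "t permutes {1..n}" using t by (simp add: Sym_def)
  assume x: "x \<in> Sym n \<and> x \<circ> inv' t \<in> K"
  have "x = (x \<circ> inv' t) \<circ> t" using permutes_inv_o(2)[OF tp] by (simp add: comp_assoc)
  then show "x \<in> K #>\<^bsub>sym_group n\<^esub> t" using x unfolding r_coset_def sym_group_mult by blast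
qed

lemma coset_rep:
  assumes K: "subgroup K (sym_group n)" and C: "C \<in> rcosets\<^bsub>sym_group n\<^esub> K"
  shows "coset_rep C \<in> C" "coset_rep C \<in> Sym n" "C = K #>\<^bsub>sym_group n\<^esub> coset_rep C"
proof -
  interpret group "sym_group n" by (rule sym_group_is_group)
  obtain a where a: "a \<in> carrier (sym_group n)" "C = K #>\<^bsub>sym_group n\<^esub> a"
    using C unfolding RCOSETS_def by auto
  have "a \<in> C" using a rcos_self[OF a(1) K] by simp
  then show r: "coset_rep C \<in> C" unfolding coset_rep_def by (rule someI[where P = "\<lambda>x. x \<in> C"])
  show "coset_rep C \<in> Sym n"
    using r a r_coset_subset_G[OF subgroup.subset[OF K] a(1)] Sym_carrier by auto
  show "C = K #>\<^bsub>sym_group n\<^esub> coset_rep C" using repr_independence[of "coset_rep C" K a] r a K by simp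
qed

lemma finite_rcosets_Sym: "finite (rcosets\<^bsub>sym_group n\<^esub> K)" if "subgroup K (sym_group n)"
proof -
  interpret group "sym_group n" by (rule sym_group_is_group)
  have "carrier (sym_group n) = {p. p permutes {1..n}}" by (auto simp: sym_group_carrier)
  then have "finite (carrier (sym_group n))" using finite_permutations[of "{1..n}"] by simp
  then show ?thesis using rcosets_subset_PowG[OF that] by (meson finite_Pow_iff finite_subset)
qed

lemma ex1_rcoset:
  assumes K: "subgroup K (sym_group n)" and g: "g \<in> Sym n"
  shows "\<exists>!C. C \<in> rcosets\<^bsub>sym_group n\<^esub> K \<and> g \<in> C"
proof -
  interpret group "sym_group n" by (rule sym_group_is_group)
  obtain C where C: "C \<in> rcosets\<^bsub>sym_group n\<^esub> K" "g \<in> C"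
    using rcosets_part_G[OF K] g Sym_carrier by blast
  moreover have "D = C" if "D \<in> rcosets\<^bsub>sym_group n\<^esub> K" "g \<in> D" for D
    using rcos_disjoint[OF K] C that unfolding pairwise_def disjnt_def by blast
  ultimately show ?thesis by blast
qed

lemma comp_inv_coset_rep_mem_iff:
  assumes K: "subgroup K (sym_group n)" and C: "C \<in> rcosets\<^bsub>sym_group n\<^esub> K" and g: "g \<in> Sym n"
  shows "g \<circ> inv' (coset_rep C) \<in> K \<longleftrightarrow> g \<in> C"
  using mem_rcos_Sym_iff[OF K coset_rep(2)[OF K C], of g] coset_rep(3)[OF K C] g by simp

lemma rcosets_right_translate_bij:
  assumes K: "subgroup K (sym_group n)" and s: "s \<in> Sym n"
  shows "bij_betw (\<lambda>C. C #>\<^bsub>sym_group n\<^esub> s) (rcosets\<^bsub>sym_group n\<^esub> K) (rcosets\<^bsub>sym_group n\<^esub> K)"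
proof -
  interpret group "sym_group n" by (rule sym_group_is_group)
  have sc: "s \<in> carrier (sym_group n)" using s Sym_carrier by auto
  have KG: "K \<subseteq> carrier (sym_group n)" using subgroup.subset[OF K] .
  have translate: "C #>\<^bsub>sym_group n\<^esub> b \<in> rcosets\<^bsub>sym_group n\<^esub> K"
    if "C \<in> rcosets\<^bsub>sym_group n\<^esub> K" "b \<in> carrier (sym_group n)" for C b
    using that coset_mult_assoc[OF KG] unfolding RCOSETS_def by auto
  have cancel: "(C #>\<^bsub>sym_group n\<^esub> b) #>\<^bsub>sym_group n\<^esub> inv\<^bsub>sym_group n\<^esub> b = C"
    if C: "C \<in> rcosets\<^bsub>sym_group n\<^esub> K" and b: "b \<in> carrier (sym_group n)" for C b
  proof -
    obtain a where a: "a \<in> carrier (sym_group n)" "C = K #>\<^bsub>sym_group n\<^esub> a"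
      using C unfolding RCOSETS_def by auto
    then show ?thesis
      using b coset_mult_assoc[OF KG] m_assoc r_inv r_one
      by (simp del: sym_group_inv_equality)
  qed
  show ?thesis
  proof (rule bij_betwI[where g = "\<lambda>C. C #>\<^bsub>sym_group n\<^esub> inv\<^bsub>sym_group n\<^esub> s"])
    show "\<And>C. C \<in> rcosets\<^bsub>sym_group n\<^esub> K \<Longrightarrow>
        (C #>\<^bsub>sym_group n\<^esub> inv\<^bsub>sym_group n\<^esub> s) #>\<^bsub>sym_group n\<^esub> s = C"
      using cancel[OF _ inv_closed[OF sc]] inv_inv[OF sc] by metis
  qed (use translate cancel sc inv_closed[OF sc] in auto)
qed

lemma sum_rcosets_right_translate:
  assumes K: "subgroup K (sym_group n)" and s: "s \<in> Sym n"
    and invariant: "\<And>h x. h \<in> K \<Longrightarrow> x \<in> Sym n \<Longrightarrow> \<phi> (h \<circ> x) = \<phi> x"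
  shows "(\<Sum>C\<in>rcosets\<^bsub>sym_group n\<^esub> K. \<phi> (coset_rep C \<circ> s)) = (\<Sum>C\<in>rcosets\<^bsub>sym_group n\<^esub> K. \<phi> (coset_rep C))"
proof -
  have on_coset: "\<phi> x = \<phi> (coset_rep C)" if C: "C \<in> rcosets\<^bsub>sym_group n\<^esub> K" and x: "x \<in> C" for C x
  proof -
    have r: "coset_rep C permutes {1..n}" using coset_rep(2)[OF K C] by (simp add: Sym_def)
    have "x \<circ> inv' (coset_rep C) \<in> K"
      using mem_rcos_Sym_iff[OF K coset_rep(2)[OF K C]] coset_rep(3)[OF K C] x by blast
    moreover have "x = (x \<circ> inv' (coset_rep C)) \<circ> coset_rep C"
      using permutes_inv_o(2)[OF r] by (simp add: comp_assoc)
    ultimately show ?thesis using invariant coset_rep(2)[OF K C] by metis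
  qed
  have "\<phi> (coset_rep C \<circ> s) = \<phi> (coset_rep (C #>\<^bsub>sym_group n\<^esub> s))"
    if C: "C \<in> rcosets\<^bsub>sym_group n\<^esub> K" for C
  proof (rule on_coset)
    show "C #>\<^bsub>sym_group n\<^esub> s \<in> rcosets\<^bsub>sym_group n\<^esub> K"
      using bij_betwE[OF rcosets_right_translate_bij[OF K s]] C by blast
    show "coset_rep C \<circ> s \<in> C #>\<^bsub>sym_group n\<^esub> s"
      using coset_rep(1)[OF K C] unfolding r_coset_def sym_group_mult by auto
  qed
  then have "(\<Sum>C\<in>rcosets\<^bsub>sym_group n\<^esub> K. \<phi> (coset_rep C \<circ> s))
      = (\<Sum>C\<in>rcosets\<^bsub>sym_group n\<^esub> K. \<phi> (coset_rep (C #>\<^bsub>sym_group n\<^esub> s)))"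
    by (rule sum.cong[OF refl])
  also have "\<dots> = (\<Sum>C\<in>rcosets\<^bsub>sym_group n\<^esub> K. \<phi> (coset_rep C))"
    using sum.reindex_bij_betw[OF rcosets_right_translate_bij[OF K s]] by simp
  finally show ?thesis .
qed

lemma subspace_sum:
  assumes V: "is_subspace V" and u: "\<And>a. a \<in> A \<Longrightarrow> u a \<in> V"
  shows "(\<lambda>x. \<Sum>a\<in>A. u a x) \<in> V"
proof (cases "finite A")
  case True
  then show ?thesis using u
  proof (induction A rule: finite_induct)
    case (insert a A)
    then show ?case using V unfolding is_subspace_def by simp
  qed (use V in \<open>simp add: is_subspace_def\<close>)
qed (use V in \<open>simp add: is_subspace_def\<close>)

definition sign_isotypic ::
    "nat \<Rightarrow> ((nat \<Rightarrow> nat) \<Rightarrow> ('x \<Rightarrow> 'f) \<Rightarrow> ('x \<Rightarrow> 'f)) \<Rightarrow> ('x \<Rightarrow> 'f::field) \<Rightarrow> bool" where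
  "sign_isotypic n \<rho> v \<longleftrightarrow> (\<forall>s\<in>Sym n. \<rho> s v = (\<lambda>x. of_int (sign s) * v x))"

definition sign_trace ::
    "nat \<Rightarrow> (nat \<Rightarrow> nat) set \<Rightarrow> ((nat \<Rightarrow> nat) \<Rightarrow> 'f::field) \<Rightarrow> (nat \<Rightarrow> nat) \<Rightarrow> 'f" where
  "sign_trace n K v g = (\<Sum>C\<in>rcosets\<^bsub>sym_group n\<^esub> K.
      of_int (sign (coset_rep C)) * Mact (inv' (coset_rep C)) v g)"

lemma sign_trace_add:
  "sign_trace n K (\<lambda>x. v x + w x) = (\<lambda>g. sign_trace n K v g + sign_trace n K w g)"
  by (simp add: sign_trace_def Mact_def distrib_left sum.distrib fun_eq_iff)

lemma sign_trace_isotypic: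
  assumes K: "subgroup K (sym_group n)" and v: "sign_isotypic n Mact v"
  shows "sign_trace n K v = (\<lambda>g. of_nat (card (rcosets\<^bsub>sym_group n\<^esub> K)) * v g)"
proof -
  have "of_int (sign r) * Mact (inv' r) v g = v g" if "r \<in> Sym n" for r g
    using v Sym_inv[OF that] sign_inv_Sym[OF that]
    by (simp add: sign_isotypic_def of_int_sign_mult_cancel)
  then show ?thesis using coset_rep(2)[OF K] by (simp add: sign_trace_def fun_eq_iff)
qed

lemma sign_trace_in_subrep:
  assumes K: "subgroup K (sym_group n)" and W: "is_subrep n W V Mact" and w: "w \<in> W"
  shows "sign_trace n K w \<in> W"
  unfolding sign_trace_def
proof (rule subspace_sum)
  show "is_subspace W" using W by (simp add: is_subrep_def)
  fix C assume "C \<in> rcosets\<^bsub>sym_group n\<^esub> K"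
  then have "Mact (inv' (coset_rep C)) w \<in> W"
    using W w Sym_inv coset_rep(2)[OF K] unfolding is_subrep_def by blast
  then show "(\<lambda>g. of_int (sign (coset_rep C)) * Mact (inv' (coset_rep C)) w g) \<in> W"
    using W unfolding is_subrep_def is_subspace_def by blast
qed

lemma sign_mult_Mact_inv_restrict:
  assumes v: "sign_isotypic n Mact v" and r: "r \<in> Sym n"
  shows "of_int (sign r) * Mact (inv' r) (\<lambda>g. if g \<in> K then v g else 0) g
      = (if g \<circ> inv' r \<in> K then v g else 0)"
proof -
  have "v (g \<circ> inv' r) = Mact (inv' r) v g" by (simp add: Mact_def)
  also have "\<dots> = of_int (sign r) * v g"
    using v Sym_inv[OF r] sign_inv_Sym[OF r] unfolding sign_isotypic_def by simp
  finally have "v (g \<circ> inv' r) = of_int (sign r) * v g" .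
  then show ?thesis by (simp add: Mact_def of_int_sign_mult_cancel)
qed

text \<open>A sign-isotypic function on \<open>S\<^sub>n\<close> is recovered from its restriction to \<open>K\<close>: each \<open>g\<close>
  lies in exactly one coset \<open>K r\<close>, and only that coset contributes to the trace.\<close>

lemma sign_trace_restrict:
  assumes K: "subgroup K (sym_group n)" and v: "sign_isotypic n Mact v"
    and v0: "\<And>g. g \<notin> Sym n \<Longrightarrow> v g = 0"
  shows "sign_trace n K (\<lambda>g. if g \<in> K then v g else 0) = v"
proof
  fix g
  have summand: "of_int (sign (coset_rep C)) * Mact (inv' (coset_rep C)) (\<lambda>g. if g \<in> K then v g else 0) g
      = (if g \<circ> inv' (coset_rep C) \<in> K then v g else 0)"
    if "C \<in> rcosets\<^bsub>sym_group n\<^esub> K" for C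
    by (rule sign_mult_Mact_inv_restrict[OF v coset_rep(2)[OF K that]])
  show "sign_trace n K (\<lambda>g. if g \<in> K then v g else 0) g = v g"
  proof (cases "g \<in> Sym n")
    case True
    then obtain C0 where C0: "C0 \<in> rcosets\<^bsub>sym_group n\<^esub> K" "g \<in> C0"
      and unique: "\<And>D. D \<in> rcosets\<^bsub>sym_group n\<^esub> K \<Longrightarrow> g \<in> D \<Longrightarrow> D = C0"
      using ex1_rcoset[OF K True] by blast
    have "sign_trace n K (\<lambda>g. if g \<in> K then v g else 0) g
        = (\<Sum>C\<in>rcosets\<^bsub>sym_group n\<^esub> K. if C = C0 then v g else 0)"
      unfolding sign_trace_def
    proof (rule sum.cong[OF refl])
      fix C assume C: "C \<in> rcosets\<^bsub>sym_group n\<^esub> K"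
      have "g \<circ> inv' (coset_rep C) \<in> K \<longleftrightarrow> C = C0"
        using comp_inv_coset_rep_mem_iff[OF K C True] unique[OF C] C0(2) by blast
      then show "of_int (sign (coset_rep C)) * Mact (inv' (coset_rep C)) (\<lambda>g. if g \<in> K then v g else 0) g
          = (if C = C0 then v g else 0)"
        using summand[OF C] by simp
    qed
    also have "\<dots> = v g" using C0(1) finite_rcosets_Sym[OF K] by simp
    finally show ?thesis .
  next
    case False
    have "sign_trace n K (\<lambda>g. if g \<in> K then v g else 0) g = (\<Sum>C\<in>rcosets\<^bsub>sym_group n\<^esub> K. 0)"
      unfolding sign_trace_def by (rule sum.cong[OF refl]) (simp add: summand v0[OF False])
    then show ?thesis using v0[OF False] by simp
  qed
qed

section \<open>Splitting off the sign representation\<close>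

lemma is_rep_sgn: "is_rep n (sgn_space :: (unit \<Rightarrow> 'f::field) set) sgn_act"
  unfolding is_rep_def is_subspace_def is_linear_on_def sgn_space_def sgn_act_def
  by (auto simp: sign_comp_Sym algebra_simps)

lemma unit_fun_eq_iff: "(u :: unit \<Rightarrow> 'a) = v \<longleftrightarrow> u () = v ()"
proof
  assume "u () = v ()"
  then show "u = v" by (intro ext) (metis unit_eq)
qed simp

lemma indecomposable_sgn: "indecomposable n (sgn_space :: (unit \<Rightarrow> 'f::field) set) sgn_act"
proof -
  have nonzero: "sgn_space \<noteq> {\<lambda>_::unit. 0::'f}"
    using fun_cong[of "\<lambda>_::unit. 1::'f" "\<lambda>_. 0" "()"] by (auto simp: sgn_space_def)
  have full: "W = sgn_space" if W: "is_subspace W" "W \<noteq> {\<lambda>_::unit. 0::'f}" for W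
  proof -
    obtain w where w: "w \<in> W" "w \<noteq> (\<lambda>_. 0)"
      using W unfolding is_subspace_def by blast
    then have w0: "w () \<noteq> 0" using unit_fun_eq_iff[of w "\<lambda>_. 0"] by simp
    have "u \<in> W" for u :: "unit \<Rightarrow> 'f"
    proof -
      have "(\<lambda>x. (u () / w ()) * w x) \<in> W" using W(1) w(1) unfolding is_subspace_def by blast
      moreover have "(\<lambda>x. (u () / w ()) * w x) = u"
        using w0 by (simp add: unit_fun_eq_iff)
      ultimately show ?thesis by simp
    qed
    then show ?thesis by (auto simp: sgn_space_def)
  qed
  show ?thesis
    unfolding indecomposable_def
  proof (intro conjI nonzero notI)
    assume "\<exists>W1 W2. is_subrep n W1 sgn_space sgn_act \<and> is_subrep n W2 sgn_space sgn_act
      \<and> is_direct_sum sgn_space W1 W2 \<and> W1 \<noteq> {\<lambda>_::unit. 0::'f} \<and> W2 \<noteq> {\<lambda>_. 0}"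
    then obtain W1 W2 where "is_subrep n W1 sgn_space sgn_act" "is_subrep n W2 sgn_space sgn_act"
      "is_direct_sum sgn_space W1 W2" "W1 \<noteq> {\<lambda>_::unit. 0::'f}" "W2 \<noteq> {\<lambda>_. 0}"
      by blast
    then have "W1 \<inter> W2 = sgn_space" "W1 \<inter> W2 = {\<lambda>_. 0}"
      using full unfolding is_subrep_def is_direct_sum_def by blast+
    then show False using nonzero by simp
  qed
qed

lemma Mact_Mspace:
  assumes "v \<in> Mspace n a b" and "s \<in> Sym n"
  shows "Mact s v \<in> Mspace n a b"
  using assms Sym_comp_iff[OF assms(2)] Sym_comp[OF _ assms(2)]
  unfolding Mspace_def Mact_def by (auto simp: comp_assoc)

lemma Mspace_subspace: "is_subspace (Mspace n a b :: ((nat \<Rightarrow> nat) \<Rightarrow> 'f::field) set)"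
  unfolding is_subspace_def Mspace_def by (auto simp: algebra_simps)

lemma is_rep_Mspace: "is_rep n (Mspace n a b :: ((nat \<Rightarrow> nat) \<Rightarrow> 'f::field) set) Mact"
  unfolding is_rep_def using Mspace_subspace Mact_Mspace
  by (auto simp: Mact_def comp_assoc is_linear_on_def)

lemma sign_isotypic_scale:
  assumes "is_rep n V \<rho>" "f \<in> V" "sign_isotypic n \<rho> f"
  shows "sign_isotypic n \<rho> (\<lambda>x. c * f x)"
  using assms unfolding is_rep_def is_linear_on_def sign_isotypic_def by (simp add: mult_ac)

lemma line_subrep:
  assumes rep: "is_rep n V \<rho>" and f0: "f0 \<in> V" "sign_isotypic n \<rho> f0"
  shows "is_subrep n (range (\<lambda>a x. a * f0 x)) V \<rho>"
  unfolding is_subrep_def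
proof (intro conjI ballI)
  have V: "is_subspace V" using rep by (simp add: is_rep_def)
  then show "range (\<lambda>a x. a * f0 x) \<subseteq> V" using f0(1) unfolding is_subspace_def by blast
  show "is_subspace (range (\<lambda>a x. a * f0 x))"
    unfolding is_subspace_def
  proof (intro conjI ballI allI)
    show "(\<lambda>_. 0) \<in> range (\<lambda>a x. a * f0 x)" using rangeI[of "\<lambda>a x. a * f0 x" 0] by simp
  next
    fix v w assume "v \<in> range (\<lambda>a x. a * f0 x)" "w \<in> range (\<lambda>a x. a * f0 x)"
    then obtain a b where "v = (\<lambda>x. a * f0 x)" "w = (\<lambda>x. b * f0 x)" by blast
    then show "(\<lambda>x. v x + w x) \<in> range (\<lambda>a x. a * f0 x)"
      using rangeI[of "\<lambda>a x. a * f0 x" "a + b"] by (simp add: distrib_right)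
  next
    fix c v assume "v \<in> range (\<lambda>a x. a * f0 x)"
    then obtain a where "v = (\<lambda>x. a * f0 x)" by blast
    then show "(\<lambda>x. c * v x) \<in> range (\<lambda>a x. a * f0 x)"
      using rangeI[of "\<lambda>a x. a * f0 x" "c * a"] by (simp add: mult.assoc)
  qed
  fix s assume s: "s \<in> Sym n"
  have scaled: "\<rho> s (\<lambda>x. a * f0 x) = (\<lambda>x. (a * of_int (sign s)) * f0 x)" for a
    using sign_isotypic_scale[OF rep f0, of a] s unfolding sign_isotypic_def by (simp add: mult_ac)
  show "\<rho> s ` range (\<lambda>a x. a * f0 x) \<subseteq> range (\<lambda>a x. a * f0 x)"
  proof
    fix w assume "w \<in> \<rho> s ` range (\<lambda>a x. a * f0 x)"
    then obtain a where "w = \<rho> s (\<lambda>x. a * f0 x)" by blast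
    then show "w \<in> range (\<lambda>a x. a * f0 x)"
      using scaled[of a] rangeI[of "\<lambda>a x. a * f0 x" "a * of_int (sign s)"] by simp
  qed
qed

lemma line_iso_sgn:
  assumes rep: "is_rep n V \<rho>" and f0: "f0 \<in> V" "sign_isotypic n \<rho> f0" "f0 \<noteq> (\<lambda>_. 0)"
  shows "Defs.is_iso n (sgn_space :: (unit \<Rightarrow> 'f::field) set) sgn_act (range (\<lambda>a x. a * f0 x)) \<rho>"
  unfolding Defs.is_iso_def
proof (intro exI conjI)
  let ?\<phi> = "\<lambda>u :: unit \<Rightarrow> 'f. \<lambda>x. u () * f0 x"
  show "is_hom n sgn_space sgn_act (range (\<lambda>a x. a * f0 x)) \<rho> ?\<phi>"
    unfolding is_hom_def is_linear_on_def
  proof (intro conjI ballI allI)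
    fix s v assume "s \<in> Sym n"
    then show "?\<phi> (sgn_act s v) = \<rho> s (?\<phi> v)"
      using sign_isotypic_scale[OF rep f0(1,2), of "v ()"] unfolding sign_isotypic_def sgn_act_def
      by (simp add: mult_ac)
  qed (auto simp: algebra_simps)
  obtain x where x: "f0 x \<noteq> 0" using f0(3) by auto
  have "inj ?\<phi>"
  proof (rule injI)
    fix u v :: "unit \<Rightarrow> 'f" assume "?\<phi> u = ?\<phi> v"
    then have "u () = v ()" using fun_cong[of "?\<phi> u" "?\<phi> v" x] x by simp
    then show "u = v" by (simp add: unit_fun_eq_iff)
  qed
  moreover have "?\<phi> ` sgn_space = range (\<lambda>a x. a * f0 x)"
    by (auto simp: sgn_space_def image_iff)
  ultimately show "bij_betw ?\<phi> sgn_space (range (\<lambda>a x. a * f0 x))"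
    by (simp add: bij_betw_def sgn_space_def)
qed

lemma kernel_subrep:
  assumes rep: "is_rep n V \<rho>"
    and smult: "\<And>c v. v \<in> V \<Longrightarrow> ell (\<lambda>x. c * v x) = c * ell v"
    and add: "\<And>v w. v \<in> V \<Longrightarrow> w \<in> V \<Longrightarrow> ell (\<lambda>x. v x + w x) = ell v + ell w"
    and equivariant: "\<And>s v. s \<in> Sym n \<Longrightarrow> v \<in> V \<Longrightarrow> ell (\<rho> s v) = of_int (sign s) * ell v"
  shows "is_subrep n {v \<in> V. ell v = 0} V \<rho>"
  unfolding is_subrep_def
proof (intro conjI ballI)
  have V: "is_subspace V" using rep by (simp add: is_rep_def)
  then have "ell (\<lambda>_. 0) = 0" using smult[of "\<lambda>_. 0" 0] by (simp add: is_subspace_def)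
  then show "is_subspace {v \<in> V. ell v = 0}" using V add smult by (auto simp: is_subspace_def)
  fix s assume s: "s \<in> Sym n"
  then have "\<rho> s ` V \<subseteq> V" using rep unfolding is_rep_def by blast
  then show "\<rho> s ` {v \<in> V. ell v = 0} \<subseteq> {v \<in> V. ell v = 0}" using equivariant[OF s] by auto
qed blast

lemma direct_sum_line_kernel:
  assumes V: "is_subspace V" and f0: "f0 \<in> V" and ell_f0: "ell f0 \<noteq> 0"
    and smult: "\<And>c v. v \<in> V \<Longrightarrow> ell (\<lambda>x. c * v x) = c * ell v"
    and add: "\<And>v w. v \<in> V \<Longrightarrow> w \<in> V \<Longrightarrow> ell (\<lambda>x. v x + w x) = ell v + ell w"
  shows "is_direct_sum V (range (\<lambda>a x. a * f0 x)) {v \<in> V. ell v = 0}"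
  unfolding is_direct_sum_def
proof (intro conjI ballI)
  show "range (\<lambda>a x. a * f0 x) \<inter> {v \<in> V. ell v = 0} = {\<lambda>_. 0}"
  proof (intro equalityI subsetI)
    fix w assume "w \<in> range (\<lambda>a x. a * f0 x) \<inter> {v \<in> V. ell v = 0}"
    then obtain a where a: "w = (\<lambda>x. a * f0 x)" "ell w = 0" by blast
    then have "a = 0" using smult[OF f0, of a] ell_f0 by simp
    then show "w \<in> {\<lambda>_. 0}" using a by simp
  next
    fix w :: "'a \<Rightarrow> 'b" assume "w \<in> {\<lambda>_. 0}"
    then have "w = (\<lambda>x. 0 * f0 x)" by simp
    moreover have "(\<lambda>x. 0 * f0 x) \<in> V" using V f0 unfolding is_subspace_def by blast
    ultimately show "w \<in> range (\<lambda>a x. a * f0 x) \<inter> {v \<in> V. ell v = 0}"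
      using smult[OF f0, of 0] rangeI[of "\<lambda>a x. a * f0 x" 0] by auto
  qed
next
  fix v assume v: "v \<in> V"
  define a where "a = ell v / ell f0"
  have add_closed: "\<And>f g. f \<in> V \<Longrightarrow> g \<in> V \<Longrightarrow> (\<lambda>x. f x + g x) \<in> V"
    using V unfolding is_subspace_def by blast
  have "(\<lambda>x. (- a) * f0 x) \<in> V" using V f0 unfolding is_subspace_def by blast
  then have rest: "(\<lambda>x. v x + (- a) * f0 x) \<in> V" using add_closed[OF v] by blast
  have "ell (\<lambda>x. v x + (- a) * f0 x) = ell v - a * ell f0"
    using add[OF v \<open>(\<lambda>x. (- a) * f0 x) \<in> V\<close>] smult[OF f0, of "- a"] by simp
  also have "\<dots> = 0" using ell_f0 by (simp add: a_def)
  finally have kernel: "(\<lambda>x. v x + (- a) * f0 x) \<in> {v \<in> V. ell v = 0}" using rest by blast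
  have "v = (\<lambda>x. a * f0 x + (v x + (- a) * f0 x))" by (simp add: fun_eq_iff)
  then have "\<exists>w2\<in>{v \<in> V. ell v = 0}. v = (\<lambda>x. a * f0 x + w2 x)"
    using kernel by (rule bexI[where x = "\<lambda>x. v x + (- a) * f0 x"])
  then show "\<exists>w1\<in>range (\<lambda>a x. a * f0 x). \<exists>w2\<in>{v \<in> V. ell v = 0}. v = (\<lambda>x. w1 x + w2 x)"
    by (rule bexI[where x = "\<lambda>x. a * f0 x"]) (rule rangeI)
qed

lemma sgn_summandI:
  assumes rep: "is_rep n V \<rho>" and f0: "f0 \<in> V" "sign_isotypic n \<rho> f0"
    and smult: "\<And>c v. v \<in> V \<Longrightarrow> ell (\<lambda>x. c * v x) = c * ell v"
    and add: "\<And>v w. v \<in> V \<Longrightarrow> w \<in> V \<Longrightarrow> ell (\<lambda>x. v x + w x) = ell v + ell w"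
    and equivariant: "\<And>s v. s \<in> Sym n \<Longrightarrow> v \<in> V \<Longrightarrow> ell (\<rho> s v) = of_int (sign s) * ell v"
    and ell_f0: "ell f0 \<noteq> 0"
  shows "is_summand n (sgn_space :: (unit \<Rightarrow> 'f::field) set) sgn_act V \<rho>"
proof -
  have V: "is_subspace V" using rep by (simp add: is_rep_def)
  have nonzero: "f0 \<noteq> (\<lambda>_. 0)"
  proof
    assume "f0 = (\<lambda>_. 0)"
    then show False using smult[OF f0(1), of 0] ell_f0 by simp
  qed
  show ?thesis
    unfolding is_summand_def
  proof (intro exI conjI)
    show "is_subrep n (range (\<lambda>a x. a * f0 x)) V \<rho>" by (rule line_subrep[OF rep f0])
    show "is_subrep n {v \<in> V. ell v = 0} V \<rho>" by (rule kernel_subrep[OF rep smult add equivariant])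
    show "is_direct_sum V (range (\<lambda>a x. a * f0 x)) {v \<in> V. ell v = 0}"
      by (rule direct_sum_line_kernel[OF V f0(1) ell_f0 smult add])
    show "Defs.is_iso n sgn_space sgn_act (range (\<lambda>a x. a * f0 x)) \<rho>"
      by (rule line_iso_sgn[OF rep f0 nonzero])
  qed
qed

lemma sgn_summandE:
  assumes "is_summand n (sgn_space :: (unit \<Rightarrow> 'f::field) set) sgn_act V \<rho>"
  obtains W1 W2 f where "is_subrep n W1 V \<rho>" "is_subrep n W2 V \<rho>" "is_direct_sum V W1 W2"
    "f \<in> W1" "f \<noteq> (\<lambda>_. 0)" "\<forall>w\<in>W1. sign_isotypic n \<rho> w"
proof -
  obtain W1 W2 \<phi> where W: "is_subrep n W1 V \<rho>" "is_subrep n W2 V \<rho>" "is_direct_sum V W1 W2"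
    and hom: "is_hom n sgn_space sgn_act W1 \<rho> \<phi>" and bij: "bij_betw \<phi> (sgn_space :: (unit \<Rightarrow> 'f) set) W1"
    using assms unfolding is_summand_def Defs.is_iso_def by blast
  have smult: "\<phi> (\<lambda>x. c * u x) = (\<lambda>y. c * \<phi> u y)" for c u
    using hom unfolding is_hom_def is_linear_on_def sgn_space_def by blast
  have isotypic: "sign_isotypic n \<rho> (\<phi> u)" for u
    unfolding sign_isotypic_def
  proof
    fix s assume "s \<in> Sym n"
    then have "\<rho> s (\<phi> u) = \<phi> (sgn_act s u)" using hom unfolding is_hom_def sgn_space_def by simp
    then show "\<rho> s (\<phi> u) = (\<lambda>x. of_int (sign s) * \<phi> u x)" using smult unfolding sgn_act_def by simp
  qed
  have "\<phi> (\<lambda>_. 1) \<noteq> (\<lambda>_. 0)"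
  proof
    assume "\<phi> (\<lambda>_. 1) = (\<lambda>_. 0)"
    also have "(\<lambda>_. 0) = \<phi> (\<lambda>_. 0)" using smult[of 0 "\<lambda>_. 1"] by simp
    finally have "(\<lambda>_::unit. 1::'f) = (\<lambda>_. 0)"
      using bij unfolding bij_betw_def inj_on_def sgn_space_def by blast
    then show False using fun_cong[of "\<lambda>_::unit. 1::'f" "\<lambda>_. 0" "()"] by simp
  qed
  moreover have "\<phi> (\<lambda>_. 1) \<in> W1" using bij unfolding bij_betw_def sgn_space_def by blast
  moreover have "\<forall>w\<in>W1. sign_isotypic n \<rho> w"
    using bij isotypic unfolding bij_betw_def sgn_space_def by auto
  ultimately show ?thesis using that W by blast
qed

lemma young_char_eq_sign_if_isotypic:
  fixes f :: "(nat \<Rightarrow> nat) \<Rightarrow> 'f::field"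
  assumes f: "f \<in> Mspace n a b" "f \<noteq> (\<lambda>_. 0)" "sign_isotypic n Mact f"
    and h: "h \<in> young_sub n a b"
  shows "young_char a h = (of_int (sign h) :: 'f)"
proof -
  have f_Sym: "f g = of_int (sign g) * f id" if "g \<in> Sym n" for g
    using fun_cong[OF f(3)[unfolded sign_isotypic_def, rule_format, OF that], of id]
    by (simp add: Mact_def)
  have "f id \<noteq> 0"
  proof
    assume "f id = 0"
    then have "f g = 0" for g using f_Sym f(1) unfolding Mspace_def by (cases "g \<in> Sym n") auto
    then show False using f(2) by auto
  qed
  have "f (h \<circ> id) = young_char a h * f id" using f(1) h id_in_Sym unfolding Mspace_def by blast
  then have char: "f h = young_char a h * f id" by simp
  have sign: "f h = of_int (sign h) * f id" using f_Sym h by (simp add: young_sub_def)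
  have "young_char a h * f id = of_int (sign h) * f id" by (rule trans[OF sym[OF char] sign])
  then show ?thesis using \<open>f id \<noteq> 0\<close> by simp
qed

lemma comp_mem_subgroup_iff:
  assumes K: "subgroup K (sym_group n)" and h: "h \<in> K" and g: "g \<in> Sym n"
  shows "h \<circ> g \<in> K \<longleftrightarrow> g \<in> K"
proof
  interpret group "sym_group n" by (rule sym_group_is_group)
  have hc: "h \<in> carrier (sym_group n)" using subgroup.subset[OF K] h by blast
  have gc: "g \<in> carrier (sym_group n)" using g Sym_carrier by blast
  assume "h \<circ> g \<in> K"
  then have "inv\<^bsub>sym_group n\<^esub> h \<otimes>\<^bsub>sym_group n\<^esub> (h \<otimes>\<^bsub>sym_group n\<^esub> g) \<in> K"
    using subgroup.m_closed[OF K subgroup.m_inv_closed[OF K h]] by (simp add: sym_group_mult)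
  moreover have "g = inv\<^bsub>sym_group n\<^esub> h \<otimes>\<^bsub>sym_group n\<^esub> (h \<otimes>\<^bsub>sym_group n\<^esub> g)"
    using inv_solve_left[OF gc hc m_closed[OF hc gc]] by blast
  ultimately show "g \<in> K" by simp
next
  assume "g \<in> K"
  then show "h \<circ> g \<in> K" using subgroup.m_closed[OF K h] by (simp add: sym_group_mult)
qed

lemma Mspace_restrict:
  assumes v: "v \<in> Mspace n a b" and K: "subgroup K (sym_group n)" and H: "young_sub n a b \<subseteq> K"
  shows "(\<lambda>g. if g \<in> K then v g else 0) \<in> Mspace n a b"
proof -
  have "K \<subseteq> Sym n" using subgroup.subset[OF K] Sym_carrier by blast
  moreover have "(if h \<circ> g \<in> K then v (h \<circ> g) else 0) = young_char a h * (if g \<in> K then v g else 0)"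
    if h: "h \<in> young_sub n a b" and g: "g \<in> Sym n" for h g
    using v h g comp_mem_subgroup_iff[OF K _ g, of h] H unfolding Mspace_def by auto
  ultimately show ?thesis using v unfolding Mspace_def by auto
qed

text \<open>If the index of a subgroup \<open>K\<close> containing the Young subgroup vanishes in the field, the sign
  representation is not a summand: a sign-isotypic \<open>f\<close> in a summand \<open>W\<^sub>1\<close> is the trace of its
  restriction to \<open>K\<close>, and the trace of the \<open>W\<^sub>1\<close>-component of that restriction is multiplied by
  the index, so \<open>f\<close> also lies in the complement \<open>W\<^sub>2\<close>.\<close>

lemma not_sgn_summand_Mspace:
  assumes K: "subgroup K (sym_group n)" and H: "young_sub n a b \<subseteq> K"
    and index: "of_nat (card (rcosets\<^bsub>sym_group n\<^esub> K)) = (0::'f::field)"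
  shows "\<not> is_summand n (sgn_space :: (unit \<Rightarrow> 'f) set) sgn_act (Mspace n a b) Mact"
proof
  assume "is_summand n (sgn_space :: (unit \<Rightarrow> 'f) set) sgn_act (Mspace n a b) Mact"
  then obtain W1 W2 and f :: "(nat \<Rightarrow> nat) \<Rightarrow> 'f" where W: "is_subrep n W1 (Mspace n a b) Mact" "is_subrep n W2 (Mspace n a b) Mact"
      "is_direct_sum (Mspace n a b) W1 W2" and f: "f \<in> W1" "f \<noteq> (\<lambda>_. 0)"
    and W1: "\<forall>w\<in>W1. sign_isotypic n Mact w"
    by (rule sgn_summandE)
  have fM: "f \<in> Mspace n a b" using W(1) f(1) unfolding is_subrep_def by blast
  then have f0: "\<And>g. g \<notin> Sym n \<Longrightarrow> f g = 0" unfolding Mspace_def by blast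
  define w where "w = (\<lambda>g. if g \<in> K then f g else 0)"
  have "w \<in> Mspace n a b" unfolding w_def by (rule Mspace_restrict[OF fM K H])
  then obtain w1 w2 where w: "w1 \<in> W1" "w2 \<in> W2" "w = (\<lambda>x. w1 x + w2 x)"
    using W(3) unfolding is_direct_sum_def by blast
  have "f = sign_trace n K w" using sign_trace_restrict[OF K bspec[OF W1 f(1)] f0] unfolding w_def by simp
  also have "\<dots> = (\<lambda>g. sign_trace n K w1 g + sign_trace n K w2 g)" using w(3) sign_trace_add by simp
  also have "\<dots> = sign_trace n K w2" using sign_trace_isotypic[OF K bspec[OF W1 w(1)]] index by simp
  finally have "f \<in> W2" using sign_trace_in_subrep[OF K W(2) w(2)] by simp
  then show False using f W(3) unfolding is_direct_sum_def by blast
qed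

definition sign_fun :: "nat \<Rightarrow> (nat \<Rightarrow> nat) \<Rightarrow> 'f::field" where
  "sign_fun n g = (if g \<in> Sym n then of_int (sign g) else 0)"

lemma sign_fun_Mspace:
  assumes char: "\<forall>h\<in>young_sub n a b. young_char a h = (of_int (sign h) :: 'f::field)"
  shows "(sign_fun n :: (nat \<Rightarrow> nat) \<Rightarrow> 'f) \<in> Mspace n a b"
  unfolding Mspace_def
proof (intro CollectI conjI allI impI ballI)
  fix g :: "nat \<Rightarrow> nat" assume "g \<notin> Sym n"
  then show "sign_fun n g = (0::'f)" by (simp add: sign_fun_def)
next
  fix h g assume h: "h \<in> young_sub n a b" and g: "g \<in> Sym n"
  have "h \<in> Sym n" using h by (simp add: young_sub_def)
  then show "(sign_fun n (h \<circ> g) :: 'f) = young_char a h * sign_fun n g"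
    using g bspec[OF char h] by (simp add: sign_fun_def Sym_comp of_int_sign_comp_Sym)
qed

lemma sign_fun_isotypic: "sign_isotypic n Mact (sign_fun n :: (nat \<Rightarrow> nat) \<Rightarrow> 'f::field)"
  unfolding sign_isotypic_def
proof (intro ballI ext)
  fix s g assume s: "s \<in> Sym n"
  show "Mact s (sign_fun n) g = of_int (sign s) * (sign_fun n g :: 'f)"
  proof (cases "g \<in> Sym n")
    case True
    then show ?thesis using s by (simp add: Mact_def sign_fun_def Sym_comp of_int_sign_comp_Sym mult.commute)
  next
    case False
    then show ?thesis using Sym_comp_iff[OF s, of g] by (simp add: Mact_def sign_fun_def)
  qed
qed

definition sign_coset_sum :: "nat \<Rightarrow> (nat \<Rightarrow> nat) set \<Rightarrow> ((nat \<Rightarrow> nat) \<Rightarrow> 'f::field) \<Rightarrow> 'f" where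
  "sign_coset_sum n K v = (\<Sum>C\<in>rcosets\<^bsub>sym_group n\<^esub> K. of_int (sign (coset_rep C)) * v (coset_rep C))"

lemma sign_coset_sum_sign_fun:
  assumes K: "subgroup K (sym_group n)"
  shows "sign_coset_sum n K (sign_fun n) = (of_nat (card (rcosets\<^bsub>sym_group n\<^esub> K)) :: 'f::field)"
proof -
  have "sign_coset_sum n K (sign_fun n) = (\<Sum>C\<in>rcosets\<^bsub>sym_group n\<^esub> K. (1::'f))"
    unfolding sign_coset_sum_def
  proof (rule sum.cong[OF refl])
    fix C assume "C \<in> rcosets\<^bsub>sym_group n\<^esub> K"
    then show "of_int (sign (coset_rep C)) * sign_fun n (coset_rep C) = (1::'f)"
      using coset_rep(2)[OF K] by (simp add: sign_fun_def of_int_sign_square)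
  qed
  then show ?thesis by simp
qed

text \<open>On \<open>M(\<alpha>|\<beta>)\<close> with character equal to the sign, \<open>x \<mapsto> sgn(x) v(x)\<close> is constant on the right
  cosets of the Young subgroup, which makes the coset sum equivariant.\<close>

lemma sign_coset_sum_equivariant:
  fixes v :: "(nat \<Rightarrow> nat) \<Rightarrow> 'f::field"
  assumes H: "subgroup (young_sub n a b) (sym_group n)"
    and char: "\<forall>h\<in>young_sub n a b. young_char a h = (of_int (sign h) :: 'f)"
    and v: "v \<in> Mspace n a b" and s: "s \<in> Sym n"
  shows "sign_coset_sum n (young_sub n a b) (Mact s v) = of_int (sign s) * sign_coset_sum n (young_sub n a b) v"
proof -
  let ?R = "rcosets\<^bsub>sym_group n\<^esub> young_sub n a b"
  have invariant: "of_int (sign (h \<circ> x)) * v (h \<circ> x) = of_int (sign x) * v x"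
    if h: "h \<in> young_sub n a b" and x: "x \<in> Sym n" for h x
  proof -
    have hS: "h \<in> Sym n" using h by (simp add: young_sub_def)
    have "v (h \<circ> x) = young_char a h * v x" using v h x unfolding Mspace_def by blast
    then have v_hx: "v (h \<circ> x) = of_int (sign h) * v x" using bspec[OF char h] by simp
    have "of_int (sign (h \<circ> x)) * v (h \<circ> x)
        = (of_int (sign h) * of_int (sign x)) * (of_int (sign h) * v x)"
      by (simp only: v_hx of_int_sign_comp_Sym[OF hS x])
    also have "\<dots> = of_int (sign h) * (of_int (sign h) * (of_int (sign x) * v x))"
      by (simp only: mult_ac)
    finally show ?thesis by (simp only: of_int_sign_mult_cancel)
  qed
  have twist: "of_int (sign r) * v (r \<circ> s) = of_int (sign s) * (of_int (sign (r \<circ> s)) * v (r \<circ> s))"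
    if r: "r \<in> Sym n" for r
  proof -
    have "of_int (sign s) * (of_int (sign (r \<circ> s)) * v (r \<circ> s))
        = of_int (sign s) * ((of_int (sign r) * of_int (sign s)) * v (r \<circ> s))"
      by (simp only: of_int_sign_comp_Sym[OF r s])
    also have "\<dots> = of_int (sign s) * (of_int (sign s) * (of_int (sign r) * v (r \<circ> s)))"
      by (simp only: mult_ac)
    finally show ?thesis by (simp only: of_int_sign_mult_cancel)
  qed
  have "sign_coset_sum n (young_sub n a b) (Mact s v)
      = (\<Sum>C\<in>?R. of_int (sign s) * (of_int (sign (coset_rep C \<circ> s)) * v (coset_rep C \<circ> s)))"
    unfolding sign_coset_sum_def Mact_def by (rule sum.cong[OF refl]) (rule twist[OF coset_rep(2)[OF H]])
  also have "\<dots> = of_int (sign s) * (\<Sum>C\<in>?R. of_int (sign (coset_rep C \<circ> s)) * v (coset_rep C \<circ> s))"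
    by (simp only: sum_distrib_left)
  also have "\<dots> = of_int (sign s) * sign_coset_sum n (young_sub n a b) v"
    using sum_rcosets_right_translate[OF H s, of "\<lambda>x. of_int (sign x) * v x"] invariant
    unfolding sign_coset_sum_def by simp
  finally show ?thesis .
qed

lemma sgn_summand_MspaceI:
  assumes H: "subgroup (young_sub n a b) (sym_group n)"
    and char: "\<forall>h\<in>young_sub n a b. young_char a h = (of_int (sign h) :: 'f::field)"
    and index: "of_nat (card (rcosets\<^bsub>sym_group n\<^esub> young_sub n a b)) \<noteq> (0::'f)"
  shows "is_summand n (sgn_space :: (unit \<Rightarrow> 'f) set) sgn_act (Mspace n a b) Mact"
proof (rule sgn_summandI[OF is_rep_Mspace sign_fun_Mspace[OF char] sign_fun_isotypic])
  show "sign_coset_sum n (young_sub n a b) (\<lambda>x. c * v x) = c * sign_coset_sum n (young_sub n a b) v"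
    for c and v :: "(nat \<Rightarrow> nat) \<Rightarrow> 'f"
    by (simp add: sign_coset_sum_def sum_distrib_left mult_ac)
  show "sign_coset_sum n (young_sub n a b) (\<lambda>x. v x + w x)
      = sign_coset_sum n (young_sub n a b) v + sign_coset_sum n (young_sub n a b) w"
    for v w :: "(nat \<Rightarrow> nat) \<Rightarrow> 'f"
    by (simp add: sign_coset_sum_def distrib_left sum.distrib)
  show "sign_coset_sum n (young_sub n a b) (Mact s v) = of_int (sign s) * sign_coset_sum n (young_sub n a b) v"
    if "s \<in> Sym n" "v \<in> Mspace n a b" for s and v :: "(nat \<Rightarrow> nat) \<Rightarrow> 'f"
    by (rule sign_coset_sum_equivariant[OF H char that(2,1)])
  have "sign_coset_sum n (young_sub n a b) (sign_fun n :: (nat \<Rightarrow> nat) \<Rightarrow> 'f)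
      = of_nat (card (rcosets\<^bsub>sym_group n\<^esub> young_sub n a b))"
    by (rule sign_coset_sum_sign_fun[OF H])
  then show "sign_coset_sum n (young_sub n a b) (sign_fun n) \<noteq> (0::'f)" using index by simp
qed

section \<open>Young subgroups of \<open>(1\<^sup>r|\<beta>)\<close>\<close>

lemma young_sub_ones_subset:
  assumes "r + sum_list b = n"
  shows "young_sub n (replicate r 1) b \<subseteq> pointwise_stab n r"
proof
  fix h assume "h \<in> young_sub n (replicate r 1) b"
  then have hS: "h \<in> Sym n"
    and hb: "\<forall>i\<in>{1..n}. block_of (replicate r 1 @ b) (h i) = block_of (replicate r 1 @ b) i"
    by (auto simp: young_sub_def)
  have total: "sum_list (replicate r 1 @ b) = n" using assms by (simp add: sum_list_replicate)
  have "h i = i" if i: "i \<in> {1..r}" for i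
  proof -
    have iin: "i \<in> {1..n}" using i assms by auto
    have hin: "h i \<in> {1..n}" using permutes_in_image[of h "{1..n}" i] hS iin by (simp add: Sym_def)
    have "block_of (replicate r 1 @ b) (h i) = i - 1" using hb iin block_of_ones_low[of i r b] i by simp
    then have "i - 1 < h i" "h i \<le> Suc (i - 1)"
      using block_of_bounds[of "h i" "replicate r 1 @ b"] hin total i
        sum_list_take_ones_append[of "i - 1" r b] sum_list_take_ones_append[of "Suc (i - 1)" r b]
      by auto
    then show ?thesis using i by simp
  qed
  then show "h \<in> pointwise_stab n r" using hS by (simp add: pointwise_stab_def)
qed

lemma pointwise_stab_subset_young_sub_ones:
  assumes "length b \<le> 1" "r + sum_list b = n"
  shows "pointwise_stab n r \<subseteq> young_sub n (replicate r 1) b"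
proof
  fix h assume "h \<in> pointwise_stab n r"
  then have hS: "h \<in> Sym n" and hf: "\<forall>i\<in>{1..r}. h i = i" by (auto simp: pointwise_stab_def)
  have hp: "h permutes {1..n}" using hS by (simp add: Sym_def)
  have "block_of (replicate r 1 @ b) (h i) = block_of (replicate r 1 @ b) i" if i: "i \<in> {1..n}" for i
  proof (cases "i \<le> r")
    case True
    then show ?thesis using hf i by simp
  next
    case False
    have hin: "h i \<in> {1..n}" using permutes_in_image[OF hp] i by simp
    have "\<not> h i \<le> r"
    proof
      assume "h i \<le> r"
      then have "h (h i) = h i" using hf hin by auto
      then have "h i = i" using permutes_inj[OF hp] by (meson injD)
      then show False using False \<open>h i \<le> r\<close> by simp
    qed
    then show ?thesis using block_of_ones_high[OF assms(1)] hin i False assms(2) by simp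
  qed
  then show "h \<in> young_sub n (replicate r 1) b" using hS by (simp add: young_sub_def)
qed

lemma young_sub_ones_eq:
  "length b \<le> 1 \<Longrightarrow> r + sum_list b = n \<Longrightarrow> young_sub n (replicate r 1) b = pointwise_stab n r"
  using young_sub_ones_subset pointwise_stab_subset_young_sub_ones by blast

lemma young_char_ones:
  assumes "h \<in> pointwise_stab n r"
  shows "young_char (replicate r 1) h = (of_int (sign h) :: 'f::field)"
proof -
  have hp: "h permutes {1..n}" and hf: "\<forall>i\<in>{1..r}. h i = i"
    using assms by (auto simp: pointwise_stab_def Sym_def)
  have "(\<lambda>i. if sum_list (replicate r (1::nat)) < i then h i else i) = h"
  proof
    fix i
    show "(if sum_list (replicate r (1::nat)) < i then h i else i) = h i"
      using hf permutes_not_in[OF hp, of 0] by (cases "i = 0") (auto simp: sum_list_replicate)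
  qed
  then show ?thesis by (simp add: young_char_def)
qed

lemma transposition_in_young_sub:
  assumes j: "j < length a" and aj: "a ! j \<ge> 2" and n: "sum_list a + sum_list b = n"
  defines "S \<equiv> sum_list (take j a)"
  shows "transpose (S + 1) (S + 2) \<in> young_sub n a b"
    and "(young_char a (transpose (S + 1) (S + 2)) :: 'f::field) = 1"
proof -
  have S_Suc: "sum_list (take (Suc j) a) = S + a ! j"
    unfolding S_def using j by (simp add: take_Suc_conv_app_nth)
  have le: "S + 2 \<le> sum_list a" using S_Suc aj sum_list_take_le[of "Suc j" a] by simp
  have "block_of (a @ b) (S + 1) = j" "block_of (a @ b) (S + 2) = j"
    using S_Suc aj j by (auto intro!: block_of_eq simp: S_def)
  then have "block_of (a @ b) (transpose (S + 1) (S + 2) i) = block_of (a @ b) i" for i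
    by (cases "i = S + 1"; cases "i = S + 2") simp_all
  moreover have "transpose (S + 1) (S + 2) permutes {1..n}"
    by (rule permutes_swap_id) (use le n in auto)
  ultimately show "transpose (S + 1) (S + 2) \<in> young_sub n a b" by (simp add: young_sub_def Sym_def)
  have "(\<lambda>i. if sum_list a < i then transpose (S + 1) (S + 2) i else i) = id"
    using le by (auto intro!: ext)
  then show "(young_char a (transpose (S + 1) (S + 2)) :: 'f) = 1"
    unfolding young_char_def by (simp only: sign_id) simp
qed

lemma ones_if_young_char_eq_sign:
  assumes one: "(1::'f::field) \<noteq> -1" and a: "is_partition a" "sum_list a + sum_list b = n"
    and char: "\<forall>h\<in>young_sub n a b. young_char a h = (of_int (sign h) :: 'f)"
  shows "a = replicate (length a) 1"
proof (rule nth_equalityI)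
  fix j assume j: "j < length a"
  have "a ! j \<noteq> 0" using a(1) j unfolding is_partition_def by (metis nth_mem)
  moreover have "\<not> a ! j \<ge> 2"
  proof
    assume "a ! j \<ge> 2"
    define S where "S = sum_list (take j a)"
    have "transpose (S + 1) (S + 2) \<in> young_sub n a b"
      "(young_char a (transpose (S + 1) (S + 2)) :: 'f) = 1"
      using transposition_in_young_sub[OF j \<open>a ! j \<ge> 2\<close> a(2)] unfolding S_def by blast+
    then show False using char one by (simp add: sign_swap_id)
  qed
  ultimately show "a ! j = replicate (length a) 1 ! j" using j by simp
qed simp

lemma dominates2_ones:
  assumes "r \<le> c" "r + sum_list b = n" "length X \<le> 1" "c + sum_list X = n"
  shows "dominates2 (replicate c 1) X (replicate r 1) b"
  unfolding dominates2_def
proof (intro allI impI conjI)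
  fix k :: nat assume k: "k \<ge> 1"
  show "sum_list (take k (replicate r 1)) \<le> sum_list (take k (replicate c (1::nat)))"
    using assms(1) sum_list_take_replicate_one[of k r] sum_list_take_replicate_one[of k c] by simp
  have "take k X = X" using k assms(3) by (cases X) auto
  then show "sum_list (replicate r 1) + sum_list (take k b) \<le> sum_list (replicate c (1::nat)) + sum_list (take k X)"
    using assms(2,4) sum_list_take_le[of k b] by (simp add: sum_list_replicate)
qed

lemma sgn_summand_Mspace_imp_ones:
  assumes p: "prime p" "odd p" "CHAR('f::field) = p" and n: "n = m * p + c" "c < p"
    and a: "is_partition a" "sum_list a + sum_list b = n"
    and summand: "is_summand n (sgn_space :: (unit \<Rightarrow> 'f) set) sgn_act (Mspace n a b) Mact"
  shows "\<exists>r\<le>c. a = replicate r 1"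
proof -
  obtain W1 W2 and f :: "(nat \<Rightarrow> nat) \<Rightarrow> 'f" where "is_subrep n W1 (Mspace n a b) Mact"
    and f: "f \<in> W1" "f \<noteq> (\<lambda>_. 0)" and W1: "\<forall>w\<in>W1. sign_isotypic n Mact w"
    using summand by (rule sgn_summandE)
  then have "f \<in> Mspace n a b" unfolding is_subrep_def by blast
  then have "\<forall>h\<in>young_sub n a b. young_char a h = (of_int (sign h) :: 'f)"
    using young_char_eq_sign_if_isotypic f(2) bspec[OF W1 f(1)] by blast
  then have "a = replicate (length a) 1"
    by (rule ones_if_young_char_eq_sign[OF one_neq_minus_one_if_CHAR_odd_prime[OF p] a])
  then obtain r where ones: "a = replicate r 1" by blast
  then have r: "r + sum_list b = n" using a(2) by (simp add: sum_list_replicate)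
  have "r \<le> c"
  proof (rule ccontr)
    assume "\<not> r \<le> c"
    then have "Suc c \<le> r" by simp
    then have "m \<ge> 1" using n r by (cases m) auto
    then have "p dvd card (rcosets\<^bsub>sym_group n\<^esub> pointwise_stab n (Suc c))"
      by (rule dvd_index_pointwise_stab[OF prime_gt_0_nat[OF p(1)] _ n(1)])
    then have index: "of_nat (card (rcosets\<^bsub>sym_group n\<^esub> pointwise_stab n (Suc c))) = (0::'f)"
      by (simp add: of_nat_eq_0_iff_char_dvd p(3))
    have "young_sub n a b \<subseteq> pointwise_stab n (Suc c)"
      unfolding ones using young_sub_ones_subset[OF r] pointwise_stab_antimono[OF \<open>Suc c \<le> r\<close>]
      by (rule order.trans)
    then show False using not_sgn_summand_Mspace[OF subgroup_pointwise_stab _ index] summand by blast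
  qed
  then show ?thesis using ones by blast
qed

theorem lemma5p4:
  fixes p n m c :: nat
  assumes "prime p" and "odd p" and "CHAR('f::field) = p"
    and "n \<ge> 1" and "n = m * p + c" and "c < p"
  shows "is_signed_young n p (replicate c 1) (if m = 0 then [] else [m])
           (sgn_space :: (unit \<Rightarrow> 'f) set) sgn_act"
proof -
  define X where "X = map ((*) p) (if m = 0 then [] else [m])"
  have X: "length X \<le> 1" "c + sum_list X = n" using assms(5) by (auto simp: X_def)
  have index: "of_nat (card (rcosets\<^bsub>sym_group n\<^esub> pointwise_stab n c)) \<noteq> (0::'f)"
    using not_dvd_index_pointwise_stab[OF assms(1,6,5)] by (simp add: of_nat_eq_0_iff_char_dvd assms(3))
  have summand: "is_summand n (sgn_space :: (unit \<Rightarrow> 'f) set) sgn_act (Mspace n (replicate c 1) X) Mact"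
    by (rule sgn_summand_MspaceI; unfold young_sub_ones_eq[OF X])
      (use subgroup_pointwise_stab young_char_ones index in auto)
  have dominance: "dominates2 (replicate c 1) X a b"
    if sums: "sum_list a + sum_list b = n" and partition: "is_partition a"
      and summand_ab: "is_summand n (sgn_space :: (unit \<Rightarrow> 'f) set) sgn_act (Mspace n a b) Mact" for a b
  proof -
    obtain r where "r \<le> c" "a = replicate r 1"
      using sgn_summand_Mspace_imp_ones[OF assms(1,2,3,5,6) partition sums summand_ab] by blast
    then show ?thesis using dominates2_ones[OF _ _ X] sums by (simp add: sum_list_replicate)
  qed
  show ?thesis
    unfolding is_signed_young_def X_def[symmetric]
    using summand dominance is_rep_sgn indecomposable_sgn assms(5)
    by (auto simp: is_partition_def sum_list_replicate X_def)
qed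

end
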